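(* In the setting of the context, fix $j\in\{1,2,3\}$ and let $A_1:=\Lambda_g$, $A_2=A_3:=\Lambda$. Assume there exists $\lambda_0\in A_j$ with $\Phi_j(\lambda_0)<1$, and that $\widehat X_{\lambda_k}\to+\infty$ in probability as $k\to\infty$ for every sequence $(\lambda_k)\subset A_j$ with $|\lambda_k|\to\infty$. Then there exists $M>0$ such that $$\inf_{\lambda\in A_j}\Phi_j(\lambda)=\inf_{\lambda\in A_j,\ |\lambda|\le M}\Phi_j(\lambda).$$
   Context: Let $X$ be a real random variable with continuous c.d.f. $F_X$ and $\mathcal X_n=(X_1,\dots,X_n)$ a random vector on the same probability space. Let $\Lambda\subseteq\mathbb R^n$, $g:\Lambda\times\mathbb R^n\to\mathbb R$ measurable, $\widehat X_\lambda:=g(\lambda,\mathcal X_n)$, and $\Lambda_g:=\{\lambda\in\Lambda:F_X(\widehat X_\lambda)\text{ is uniform on }(0,1)\}$. $|\cdot|$ is the Euclidean norm. For $\gamma>0$ define $\Phi_1(\lambda)=\mathbf E F_X(X\vee\widehat X_\lambda)$, $\Phi_2(\lambda)=2\,\mathbf E F_X(X\vee\widehat X_\lambda)-\mathbf E F_X(\widehat X_\lambda)$, $\Phi_3(\lambda)=\Phi_2(\lambda)+\gamma\big[\mathbf E F_X^2(\widehat X_\lambda)-\mathbf E[F_X(\widehat X_\lambda)\vee Y_\lambda]\big]$, where $Y_\lambda$ is a copy of $F_X(\widehat X_\lambda)$ independent of $F_X(\widehat X_\lambda)$, and $a\vee b=\max\{a,b\}$. *)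

theory Defs
  imports "HOL-Probability.Probability"
begin

definition FX :: "'a measure \<Rightarrow> ('a \<Rightarrow> real) \<Rightarrow> real \<Rightarrow> real" where
  "FX M X = cdf (distr M borel X)"

definition Xhat :: "(real^'n \<Rightarrow> real^'n \<Rightarrow> real) \<Rightarrow> ('a \<Rightarrow> real^'n) \<Rightarrow> real^'n \<Rightarrow> 'a \<Rightarrow> real" where
  "Xhat g Xn l = (\<lambda>\<omega>. g l (Xn \<omega>))"

definition Lambda_g :: "'a measure \<Rightarrow> ('a \<Rightarrow> real) \<Rightarrow> ('a \<Rightarrow> real^'n)
    \<Rightarrow> (real^'n \<Rightarrow> real^'n \<Rightarrow> real) \<Rightarrow> (real^'n) set \<Rightarrow> (real^'n) set" where
  "Lambda_g M X Xn g \<Lambda> =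
     {l \<in> \<Lambda>. distr M borel (\<lambda>\<omega>. FX M X (Xhat g Xn l \<omega>)) = uniform_measure lborel {0<..<1}}"

definition Phi1 :: "'a measure \<Rightarrow> ('a \<Rightarrow> real) \<Rightarrow> ('a \<Rightarrow> real^'n)
    \<Rightarrow> (real^'n \<Rightarrow> real^'n \<Rightarrow> real) \<Rightarrow> real^'n \<Rightarrow> real" where
  "Phi1 M X Xn g l = (\<integral>\<omega>. FX M X (max (X \<omega>) (Xhat g Xn l \<omega>)) \<partial>M)"

definition Phi2 :: "'a measure \<Rightarrow> ('a \<Rightarrow> real) \<Rightarrow> ('a \<Rightarrow> real^'n)
    \<Rightarrow> (real^'n \<Rightarrow> real^'n \<Rightarrow> real) \<Rightarrow> real^'n \<Rightarrow> real" where
  "Phi2 M X Xn g l = 2 * Phi1 M X Xn g l - (\<integral>\<omega>. FX M X (Xhat g Xn l \<omega>) \<partial>M)"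

text \<open>E[F(hat X) max Y] with Y an independent copy of F(hat X): integral of max
  against the product of the law of F(hat X) with itself.\<close>
definition Phi3 :: "real \<Rightarrow> 'a measure \<Rightarrow> ('a \<Rightarrow> real) \<Rightarrow> ('a \<Rightarrow> real^'n)
    \<Rightarrow> (real^'n \<Rightarrow> real^'n \<Rightarrow> real) \<Rightarrow> real^'n \<Rightarrow> real" where
  "Phi3 \<gamma> M X Xn g l =
     (let D = distr M borel (\<lambda>\<omega>. FX M X (Xhat g Xn l \<omega>)) in
      Phi2 M X Xn g l + \<gamma> * ((\<integral>\<omega>. (FX M X (Xhat g Xn l \<omega>))^2 \<partial>M)
                                - (\<integral>p. max (fst p) (snd p) \<partial>(D \<Otimes>\<^sub>M D))))"

definition PhiJ :: "nat \<Rightarrow> real \<Rightarrow> 'a measure \<Rightarrow> ('a \<Rightarrow> real) \<Rightarrow> ('a \<Rightarrow> real^'n)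
    \<Rightarrow> (real^'n \<Rightarrow> real^'n \<Rightarrow> real) \<Rightarrow> real^'n \<Rightarrow> real" where
  "PhiJ j \<gamma> M X Xn g = (if j = 1 then Phi1 M X Xn g else if j = 2 then Phi2 M X Xn g
                          else Phi3 \<gamma> M X Xn g)"

definition AJ :: "nat \<Rightarrow> 'a measure \<Rightarrow> ('a \<Rightarrow> real) \<Rightarrow> ('a \<Rightarrow> real^'n)
    \<Rightarrow> (real^'n \<Rightarrow> real^'n \<Rightarrow> real) \<Rightarrow> (real^'n) set \<Rightarrow> (real^'n) set" where
  "AJ j M X Xn g \<Lambda> = (if j = 1 then Lambda_g M X Xn g \<Lambda> else \<Lambda>)"

end

theory Submission
  imports Defs
begin

text \<open>Each \<open>\<Phi>\<^sub>j(\<lambda>)\<close> dominates \<open>(1 + 2\<gamma>) e(\<lambda>) - 2\<gamma>\<close>, where \<open>e(\<lambda>) = E F\<^sub>X(X\<^sub>\<lambda>)\<close>: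
  \<open>\<Phi>\<^sub>1\<close> and \<open>\<Phi>\<^sub>2\<close> dominate \<open>e(\<lambda>)\<close>, and in \<open>\<Phi>\<^sub>3\<close> the second moment of \<open>F\<^sub>X(X\<^sub>\<lambda>)\<close> is at least
  \<open>2 e(\<lambda>) - 1\<close> while the expected maximum of two values in \<open>[0,1]\<close> is at most 1. If \<open>X\<^sub>\<lambda>\<close>
  tends to \<open>+\<infinity>\<close> in probability then \<open>e(\<lambda>) \<rightarrow> 1\<close>, so along every sequence with \<open>|\<lambda>| \<rightarrow> \<infinity>\<close>
  the functional eventually exceeds \<open>\<Phi>\<^sub>j(\<lambda>\<^sub>0) < 1\<close>. A diagonal argument turns this into a
  ball outside of which \<open>\<Phi>\<^sub>j > \<Phi>\<^sub>j(\<lambda>\<^sub>0)\<close>, and the infimum is then taken inside that ball.\<close>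

lemma ex_norm_bound_if_escaping:
  fixes A :: "'a::real_normed_vector set"
  assumes escape: "\<And>ls. (\<forall>k. ls k \<in> A) \<Longrightarrow> filterlim (\<lambda>k. norm (ls k)) at_top sequentially \<Longrightarrow>
                   eventually (\<lambda>k. P (ls k)) sequentially"
  shows "\<exists>R. \<forall>l\<in>A. R < norm l \<longrightarrow> P l"
proof (rule ccontr)
  assume "\<not> ?thesis"
  then have "\<forall>n::nat. \<exists>l. l \<in> A \<and> real n < norm l \<and> \<not> P l"
    by auto
  then obtain ls where ls: "\<And>n. ls n \<in> A" "\<And>n. real n < norm (ls n)" "\<And>n. \<not> P (ls n)"
    by metis
  have "filterlim (\<lambda>k. norm (ls k)) at_top sequentially"
    by (rule filterlim_at_top_mono[OF filterlim_real_sequentially])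
       (use ls(2) less_imp_le in \<open>auto intro: always_eventually\<close>)
  then have "eventually (\<lambda>k. P (ls k)) sequentially"
    using escape ls(1) by blast
  then show False
    using ls(3) by (simp add: eventually_sequentially)
qed

lemma INF_eq_INF_norm_le:
  fixes \<Phi> :: "'a::real_normed_vector \<Rightarrow> real"
  assumes bdd: "bdd_below (\<Phi> ` A)" and l0: "l0 \<in> A" "norm l0 \<le> R"
    and outside: "\<And>l. l \<in> A \<Longrightarrow> R < norm l \<Longrightarrow> \<Phi> l0 \<le> \<Phi> l"
  shows "(INF l\<in>A. \<Phi> l) = (INF l\<in>{l\<in>A. norm l \<le> R}. \<Phi> l)"
proof (rule antisym)
  let ?B = "{l\<in>A. norm l \<le> R}"
  have l0B: "l0 \<in> ?B" using l0 by simp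
  have bddB: "bdd_below (\<Phi> ` ?B)"
    using bdd by (rule bdd_below_mono) auto
  show "(INF l\<in>A. \<Phi> l) \<le> (INF l\<in>?B. \<Phi> l)"
    using l0B bdd by (intro cINF_superset_mono) auto
  show "(INF l\<in>?B. \<Phi> l) \<le> (INF l\<in>A. \<Phi> l)"
  proof (rule cINF_greatest)
    fix l assume l: "l \<in> A"
    show "(INF l\<in>?B. \<Phi> l) \<le> \<Phi> l"
    proof (cases "norm l \<le> R")
      case True
      then show ?thesis using l bddB by (intro cINF_lower) auto
    next
      case False
      then have "\<Phi> l0 \<le> \<Phi> l" using outside l by simp
      moreover have "(INF l\<in>?B. \<Phi> l) \<le> \<Phi> l0" using bddB l0B by (rule cINF_lower)
      ultimately show ?thesis by linarith
    qed
  qed (use l0 in auto)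
qed

lemma integral_max_pair_le_1:
  fixes D :: "real measure"
  assumes D: "prob_space D" "sets D = sets borel" and le1: "AE x in D. x \<le> 1"
  shows "(\<integral>p. max (fst p) (snd p) \<partial>(D \<Otimes>\<^sub>M D)) \<le> 1"
proof (cases "integrable (D \<Otimes>\<^sub>M D) (\<lambda>p. max (fst p) (snd p))")
  case True
  interpret D: prob_space D by fact
  interpret DD: pair_prob_space D D ..
  have sets_DD: "sets (D \<Otimes>\<^sub>M D) = sets (borel \<Otimes>\<^sub>M borel)"
    using D(2) D(2) by (rule sets_pair_measure_cong)
  have "{p \<in> space (borel \<Otimes>\<^sub>M borel). max (fst p) (snd p) \<le> (1::real)} \<in> sets (borel \<Otimes>\<^sub>M borel)"
    by measurable
  then have meas: "{p \<in> space (D \<Otimes>\<^sub>M D). max (fst p) (snd p) \<le> (1::real)} \<in> sets (D \<Otimes>\<^sub>M D)"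
    using sets_DD sets_eq_imp_space_eq[OF sets_DD] by simp
  have "AE p in D \<Otimes>\<^sub>M D. max (fst p) (snd p) \<le> 1"
    using le1 by (intro DD.AE_pair_measure[OF meas]) (auto elim: AE_mp)
  then show ?thesis using DD.P.integral_le_const[OF True] by simp
qed (simp add: not_integrable_integral_eq)

lemma measurable_Xhat:
  assumes "l \<in> \<Lambda>" "Xn \<in> borel_measurable M"
    and g: "(\<lambda>p. g (fst p) (snd p)) \<in> borel_measurable (restrict_space borel (\<Lambda> \<times> UNIV))"
  shows "Xhat g Xn l \<in> borel_measurable M"
proof -
  have "(\<lambda>\<omega>. (l, Xn \<omega>)) \<in> measurable M (restrict_space borel (\<Lambda> \<times> UNIV))"
  proof (rule measurable_restrict_space2)
    have "(\<lambda>\<omega>. (l, Xn \<omega>)) \<in> measurable M (borel \<Otimes>\<^sub>M borel)"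
      using assms(2) by measurable
    then show "(\<lambda>\<omega>. (l, Xn \<omega>)) \<in> measurable M borel"
      by (simp add: borel_prod)
  qed (use assms(1) in auto)
  from measurable_compose[OF this g] show ?thesis
    by (simp add: Xhat_def)
qed

context prob_space
begin

lemma
  assumes "random_variable borel X"
  shows FX_nonneg: "0 \<le> FX M X x"
    and FX_le_1: "FX M X x \<le> 1"
    and mono_FX: "mono (FX M X)"
    and FX_tendsto_1: "(FX M X \<longlongrightarrow> 1) at_top"
proof -
  interpret R: real_distribution "distr M borel X"
    using assms by simp
  show "0 \<le> FX M X x" "FX M X x \<le> 1" "(FX M X \<longlongrightarrow> 1) at_top"
    unfolding FX_def using R.cdf_nonneg R.cdf_bounded_prob R.cdf_lim_at_top_prob by auto
  show "mono (FX M X)"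
    unfolding FX_def mono_def using R.cdf_nondecreasing by auto
qed

lemma integrable_bounded_mono_comp:
  fixes f :: "real \<Rightarrow> real"
  assumes "mono f" "\<And>x. 0 \<le> f x" "\<And>x. f x \<le> 1" "random_variable borel Y"
  shows "integrable M (\<lambda>\<omega>. f (Y \<omega>))"
proof (rule integrable_const_bound[where B=1])
  show "(\<lambda>\<omega>. f (Y \<omega>)) \<in> borel_measurable M"
    using borel_measurable_mono[OF assms(1)] assms(4) by measurable
qed (use assms(2,3) in \<open>auto simp: abs_le_iff intro: order_trans[OF _ assms(2)]\<close>)

lemma expectation_bounded_mono_comp_ge:
  fixes f :: "real \<Rightarrow> real"
  assumes f: "mono f" "\<And>x. 0 \<le> f x" "\<And>x. f x \<le> 1" and Y[measurable]: "random_variable borel Y"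
  shows "f K - prob {\<omega> \<in> space M. Y \<omega> \<le> K} \<le> expectation (\<lambda>\<omega>. f (Y \<omega>))"
proof -
  let ?A = "{\<omega> \<in> space M. K < Y \<omega>}" and ?B = "{\<omega> \<in> space M. Y \<omega> \<le> K}"
  have AB: "?A \<in> events" "?B \<in> events" by measurable
  have "space M - ?B = ?A" by auto
  then have "prob ?A = 1 - prob ?B"
    using prob_compl[OF AB(2)] by simp
  then have "f K * prob ?A = f K - f K * prob ?B"
    by (simp add: right_diff_distrib)
  moreover have "f K * prob ?B \<le> prob ?B"
    using f(2,3)[of K] by (simp add: mult_left_le_one_le)
  ultimately have "f K - prob ?B \<le> f K * prob ?A"
    by linarith
  also have "\<dots> = expectation (\<lambda>\<omega>. f K * indicator ?A \<omega>)"
    using AB(1) by simp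
  also have "\<dots> \<le> expectation (\<lambda>\<omega>. f (Y \<omega>))"
  proof (rule integral_mono)
    show "integrable M (\<lambda>\<omega>. f K * indicator ?A \<omega>)"
      using AB(1) by (simp add: integrable_indicator_iff emeasure_eq_measure)
    show "integrable M (\<lambda>\<omega>. f (Y \<omega>))"
      by (rule integrable_bounded_mono_comp[OF f Y])
  qed (use f(1,2) in \<open>auto simp: indicator_def mono_def\<close>)
  finally show ?thesis .
qed

lemma tendsto_expectation_bounded_mono_comp:
  fixes f :: "real \<Rightarrow> real"
  assumes f: "mono f" "\<And>x. 0 \<le> f x" "\<And>x. f x \<le> 1" "(f \<longlongrightarrow> 1) at_top"
    and Y: "\<And>k. random_variable borel (Y k)"
    and escape: "\<And>K. (\<lambda>k. prob {\<omega> \<in> space M. Y k \<omega> \<le> K}) \<longlonglongrightarrow> 0"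
  shows "(\<lambda>k. expectation (\<lambda>\<omega>. f (Y k \<omega>))) \<longlonglongrightarrow> 1"
proof (rule order_tendstoI)
  fix a :: real assume "a < 1"
  define \<epsilon> where "\<epsilon> = (1 - a) / 2"
  have "\<epsilon> > 0" using \<open>a < 1\<close> by (simp add: \<epsilon>_def)
  have "eventually (\<lambda>x. 1 - \<epsilon> < f x) at_top"
    using f(4) \<open>\<epsilon> > 0\<close> by (intro order_tendstoD(1)) auto
  then obtain K where K: "1 - \<epsilon> < f K"
    by (auto simp: eventually_at_top_linorder)
  have "eventually (\<lambda>k. prob {\<omega> \<in> space M. Y k \<omega> \<le> K} < \<epsilon>) sequentially"
    using escape \<open>\<epsilon> > 0\<close> by (intro order_tendstoD(2)) auto
  then show "eventually (\<lambda>k. a < expectation (\<lambda>\<omega>. f (Y k \<omega>))) sequentially"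
  proof eventually_elim
    case (elim k)
    have "f K - prob {\<omega> \<in> space M. Y k \<omega> \<le> K} \<le> expectation (\<lambda>\<omega>. f (Y k \<omega>))"
      by (rule expectation_bounded_mono_comp_ge[OF f(1-3) Y])
    moreover have "a < f K - prob {\<omega> \<in> space M. Y k \<omega> \<le> K}"
      using K elim unfolding \<epsilon>_def by (simp add: field_simps)
    ultimately show ?case
      by linarith
  qed
next
  fix a :: real assume "1 < a"
  have "expectation (\<lambda>\<omega>. f (Y k \<omega>)) \<le> 1" for k
    using integrable_bounded_mono_comp[OF f(1-3) Y] f(3) by (intro integral_le_const) auto
  with \<open>1 < a\<close> show "eventually (\<lambda>k. expectation (\<lambda>\<omega>. f (Y k \<omega>)) < a) sequentially"
    by (intro always_eventually) (auto intro: le_less_trans)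
qed

lemma
  assumes X: "random_variable borel X" and Y: "random_variable borel Y"
  shows expectation_FX_nonneg: "0 \<le> expectation (\<lambda>\<omega>. FX M X (Y \<omega>))"
    and expectation_FX_le_1: "expectation (\<lambda>\<omega>. FX M X (Y \<omega>)) \<le> 1"
  using integrable_bounded_mono_comp[OF mono_FX[OF X] FX_nonneg[OF X] FX_le_1[OF X] Y]
  by (auto simp: FX_nonneg[OF X] FX_le_1[OF X] intro: integral_le_const)

lemma expectation_FX_le_Phi1:
  assumes X: "random_variable borel X" and Y: "random_variable borel (Xhat g Xn l)"
  shows "expectation (\<lambda>\<omega>. FX M X (Xhat g Xn l \<omega>)) \<le> Phi1 M X Xn g l"
  unfolding Phi1_def
proof (rule integral_mono)
  note FX = mono_FX[OF X] FX_nonneg[OF X] FX_le_1[OF X]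
  show "integrable M (\<lambda>\<omega>. FX M X (Xhat g Xn l \<omega>))"
    by (rule integrable_bounded_mono_comp[OF FX Y])
  show "integrable M (\<lambda>\<omega>. FX M X (max (X \<omega>) (Xhat g Xn l \<omega>)))"
    using X Y by (intro integrable_bounded_mono_comp[OF FX]) measurable
  show "FX M X (Xhat g Xn l \<omega>) \<le> FX M X (max (X \<omega>) (Xhat g Xn l \<omega>))" for \<omega>
    using FX(1) by (simp add: mono_def)
qed

lemma expectation_FX_le_Phi2:
  assumes "random_variable borel X" "random_variable borel (Xhat g Xn l)"
  shows "expectation (\<lambda>\<omega>. FX M X (Xhat g Xn l \<omega>)) \<le> Phi2 M X Xn g l"
  using expectation_FX_le_Phi1[OF assms] by (simp add: Phi2_def)

lemma Phi3_ge:
  assumes X: "random_variable borel X" and Y: "random_variable borel (Xhat g Xn l)"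
    and "0 \<le> \<gamma>"
  defines "e \<equiv> expectation (\<lambda>\<omega>. FX M X (Xhat g Xn l \<omega>))"
  shows "(1 + 2 * \<gamma>) * e - 2 * \<gamma> \<le> Phi3 \<gamma> M X Xn g l"
proof -
  note FX = mono_FX[OF X] FX_nonneg[OF X] FX_le_1[OF X]
  let ?Z = "\<lambda>\<omega>. FX M X (Xhat g Xn l \<omega>)"
  define D where "D = distr M borel ?Z"
  have Z[measurable]: "random_variable borel ?Z"
    using borel_measurable_mono[OF FX(1)] Y by measurable
  have intZ: "integrable M ?Z"
    by (rule integrable_bounded_mono_comp[OF FX Y])
  have intZ2: "integrable M (\<lambda>\<omega>. (?Z \<omega>)\<^sup>2)"
    using FX by (intro integrable_bounded_mono_comp[OF _ _ _ Y])
      (auto simp: mono_def power_le_one intro: power_mono)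
  have "2 * e - 1 = expectation (\<lambda>\<omega>. 2 * ?Z \<omega> - 1)"
    using intZ by (simp add: e_def prob_space)
  also have "\<dots> \<le> expectation (\<lambda>\<omega>. (?Z \<omega>)\<^sup>2)"
  proof (rule integral_mono)
    show "2 * ?Z \<omega> - 1 \<le> (?Z \<omega>)\<^sup>2" for \<omega>
      using zero_le_power2[of "?Z \<omega> - 1"] by (simp add: power2_diff)
  qed (use intZ intZ2 in auto)
  finally have second_moment: "2 * e - 1 \<le> expectation (\<lambda>\<omega>. (?Z \<omega>)\<^sup>2)" .
  have "AE x in D. x \<le> 1"
    unfolding D_def by (subst AE_distr_iff) (auto simp: FX(3))
  then have max_le: "(\<integral>p. max (fst p) (snd p) \<partial>(D \<Otimes>\<^sub>M D)) \<le> 1"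
    by (intro integral_max_pair_le_1) (auto simp: D_def prob_space_distr)
  have "e \<le> Phi2 M X Xn g l"
    unfolding e_def by (rule expectation_FX_le_Phi2[OF X Y])
  moreover have "\<gamma> * (2 * e - 2) \<le> \<gamma> * (expectation (\<lambda>\<omega>. (?Z \<omega>)\<^sup>2)
                       - (\<integral>p. max (fst p) (snd p) \<partial>(D \<Otimes>\<^sub>M D)))"
    using second_moment max_le \<open>0 \<le> \<gamma>\<close> by (intro mult_left_mono) auto
  ultimately show ?thesis
    by (simp add: Phi3_def D_def Let_def algebra_simps)
qed

lemma PhiJ_ge:
  assumes X: "random_variable borel X" and Y: "random_variable borel (Xhat g Xn l)"
    and "0 \<le> \<gamma>"
  defines "e \<equiv> expectation (\<lambda>\<omega>. FX M X (Xhat g Xn l \<omega>))"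
  shows "(1 + 2 * \<gamma>) * e - 2 * \<gamma> \<le> PhiJ j \<gamma> M X Xn g l"
proof -
  have "e \<le> 1"
    unfolding e_def by (rule expectation_FX_le_1[OF X Y])
  then have "(1 + 2 * \<gamma>) * e - 2 * \<gamma> \<le> e"
    using \<open>0 \<le> \<gamma>\<close> by (simp add: algebra_simps mult_left_le)
  then show ?thesis
    using expectation_FX_le_Phi1[OF X Y] expectation_FX_le_Phi2[OF X Y] Phi3_ge[OF X Y \<open>0 \<le> \<gamma>\<close>]
    by (auto simp: PhiJ_def e_def)
qed

lemma PhiJ_lower_bound:
  assumes "random_variable borel X" "random_variable borel (Xhat g Xn l)" "0 \<le> \<gamma>"
  shows "- 2 * \<gamma> \<le> PhiJ j \<gamma> M X Xn g l"
proof -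
  have "0 \<le> (1 + 2 * \<gamma>) * expectation (\<lambda>\<omega>. FX M X (Xhat g Xn l \<omega>))"
    using expectation_FX_nonneg[OF assms(1,2)] assms(3) by simp
  with PhiJ_ge[OF assms, of j] show ?thesis
    by linarith
qed

lemma eventually_PhiJ_gt:
  assumes X: "random_variable borel X" and Y: "\<And>k. random_variable borel (Xhat g Xn (ls k))"
    and escape: "\<And>K. (\<lambda>k. prob {\<omega> \<in> space M. Xhat g Xn (ls k) \<omega> \<le> K}) \<longlonglongrightarrow> 0"
    and "0 \<le> \<gamma>" "c < 1"
  shows "eventually (\<lambda>k. c < PhiJ j \<gamma> M X Xn g (ls k)) sequentially"
proof -
  define e where "e k = expectation (\<lambda>\<omega>. FX M X (Xhat g Xn (ls k) \<omega>))" for k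
  have "e \<longlonglongrightarrow> 1"
    unfolding e_def using Y escape
    by (rule tendsto_expectation_bounded_mono_comp[OF mono_FX FX_nonneg FX_le_1 FX_tendsto_1, OF X X X X])
  then have "(\<lambda>k. (1 + 2 * \<gamma>) * e k - 2 * \<gamma>) \<longlonglongrightarrow> (1 + 2 * \<gamma>) * 1 - 2 * \<gamma>"
    by (intro tendsto_intros)
  then have "eventually (\<lambda>k. c < (1 + 2 * \<gamma>) * e k - 2 * \<gamma>) sequentially"
    using \<open>c < 1\<close> by (intro order_tendstoD(1)) auto
  then show ?thesis
  proof eventually_elim
    case (elim k)
    with PhiJ_ge[OF X Y[of k] \<open>0 \<le> \<gamma>\<close>, of j] show ?case
      unfolding e_def by linarith
  qed
qed

end

theorem mainTheorem11:
  fixes M :: "'a measure" and X :: "'a \<Rightarrow> real" and Xn :: "'a \<Rightarrow> real^'n"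
    and \<Lambda> :: "(real^'n) set" and g :: "real^'n \<Rightarrow> real^'n \<Rightarrow> real"
    and \<gamma> :: real and j :: nat
  assumes "prob_space M"
    and "X \<in> borel_measurable M"
    and "\<And>x. isCont (FX M X) x"
    and "Xn \<in> borel_measurable M"
    and "(\<lambda>p. g (fst p) (snd p)) \<in> borel_measurable (restrict_space borel (\<Lambda> \<times> UNIV))"
    and "\<gamma> > 0"
    and "j \<in> {1, 2, 3}"
    and "\<exists>l0 \<in> AJ j M X Xn g \<Lambda>. PhiJ j \<gamma> M X Xn g l0 < 1"
    and "\<And>ls :: nat \<Rightarrow> real^'n. (\<forall>k. ls k \<in> AJ j M X Xn g \<Lambda>) \<Longrightarrow>
            filterlim (\<lambda>k. norm (ls k)) at_top sequentially \<Longrightarrow>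
            (\<forall>K::real. (\<lambda>k. measure M {\<omega> \<in> space M. Xhat g Xn (ls k) \<omega> \<le> K}) \<longlonglongrightarrow> 0)"
  shows "\<exists>R > 0. (INF l \<in> AJ j M X Xn g \<Lambda>. PhiJ j \<gamma> M X Xn g l)
                 = (INF l \<in> {l \<in> AJ j M X Xn g \<Lambda>. norm l \<le> R}. PhiJ j \<gamma> M X Xn g l)"
proof -
  interpret prob_space M by fact
  define A where "A = AJ j M X Xn g \<Lambda>"
  define \<Phi> where "\<Phi> = PhiJ j \<gamma> M X Xn g"
  have Y: "random_variable borel (Xhat g Xn l)" if "l \<in> A" for l
    using measurable_Xhat[OF _ assms(4,5)] that by (auto simp: A_def AJ_def Lambda_g_def split: if_splits)
  have bdd: "bdd_below (\<Phi> ` A)"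
    using PhiJ_lower_bound[OF assms(2) Y] assms(6) by (intro bdd_belowI2[where m="- 2 * \<gamma>"]) (simp add: \<Phi>_def)
  obtain l0 where l0: "l0 \<in> A" "\<Phi> l0 < 1"
    using assms(8) by (auto simp: A_def \<Phi>_def)
  have "\<exists>R. \<forall>l\<in>A. R < norm l \<longrightarrow> \<Phi> l0 < \<Phi> l"
  proof (rule ex_norm_bound_if_escaping)
    fix ls assume "\<forall>k. ls k \<in> A" "filterlim (\<lambda>k. norm (ls k)) at_top sequentially"
    with assms(9)[of ls] show "eventually (\<lambda>k. \<Phi> l0 < \<Phi> (ls k)) sequentially"
      unfolding \<Phi>_def using assms(2,6) l0(2) Y
      by (intro eventually_PhiJ_gt) (auto simp: A_def \<Phi>_def)
  qed
  then obtain R where R: "\<forall>l\<in>A. R < norm l \<longrightarrow> \<Phi> l0 < \<Phi> l" ..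
  define R' where "R' = max R (norm l0) + 1"
  have "(INF l\<in>A. \<Phi> l) = (INF l\<in>{l\<in>A. norm l \<le> R'}. \<Phi> l)"
    using R by (intro INF_eq_INF_norm_le[OF bdd l0(1)]) (auto simp: R'_def)
  moreover have "R' > 0"
    unfolding R'_def using norm_ge_zero[of l0] by linarith
  ultimately show ?thesis
    unfolding A_def \<Phi>_def by (intro exI[of _ R']) simp
qed

end
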